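(* Let $l>0$ and $g>0$, and for real parameters $\Lambda_1,\Lambda_2$ let $\bar U(\theta)=\Lambda_1\cos 2\theta+\Lambda_2\sin 2\theta-gl\cos\theta$ with $l=1$, $g=1$, i.e. $\bar U(\theta)=\Lambda_1\cos 2\theta+\Lambda_2\sin 2\theta-\cos\theta$. Then $\bar U$ has a degenerate critical point, i.e. there exists $\theta\in\mathbb{R}$ with $\bar U'(\theta)=0$ and $\bar U''(\theta)=0$, if and only if $(\Lambda_1,\Lambda_2)$ lies on the curve $$\Gamma_1=\left\{\left(\tfrac{\cos^3\theta}{2}-\tfrac{3\cos\theta}{4},\ \tfrac{\sin^3\theta}{2}\right):\ \theta\in\mathbb{R}\right\}.$$
   Context: $\bar U$ is the effective potential of the averaged Hamiltonian $\bar H(\theta,p)=\frac{p^2}{2l^2}+\bar U(\theta)$ of a pendulum (rod length $l$, unit mass, gravity $g$) whose suspension point is subjected to small stochastic vibrations; here $l=g=1$. The parameters $\Lambda_1,\Lambda_2$ are arbitrary real numbers. *)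

theory Defs
  imports "HOL-Analysis.Analysis"
begin

definition Ubar :: "real \<Rightarrow> real \<Rightarrow> real \<Rightarrow> real" where
  "Ubar L1 L2 \<theta> = L1 * cos (2 * \<theta>) + L2 * sin (2 * \<theta>) - cos \<theta>"

definition Gamma1 :: "(real \<times> real) set" where
  "Gamma1 = {(cos t ^ 3 / 2 - 3 * cos t / 4, sin t ^ 3 / 2) | t. True}"

end

theory Submission
  imports Defs
begin

text \<open>
  Both \<open>U'(\<theta>) = 0\<close> and \<open>U''(\<theta>) = 0\<close> are linear in \<open>(\<Lambda>\<^sub>1, \<Lambda>\<^sub>2)\<close>, with
  the rotation by \<open>2\<theta>\<close> as coefficient matrix. Inverting the rotation shows that
  \<open>\<theta>\<close> is a degenerate critical point for exactly one parameter pair,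
  \<open>(3 cos \<theta> / 4 - cos\<^sup>3 \<theta> / 2, sin\<^sup>3 \<theta> / 2)\<close>. Substituting \<open>\<theta> = \<pi> - t\<close>
  turns this parametrisation into the one defining \<open>\<Gamma>\<^sub>1\<close>.
\<close>

lemma deriv_Ubar:
  "deriv (Ubar L1 L2) = (\<lambda>x. - 2 * L1 * sin (2 * x) + 2 * L2 * cos (2 * x) + sin x)"
proof
  fix x
  show "deriv (Ubar L1 L2) x = - 2 * L1 * sin (2 * x) + 2 * L2 * cos (2 * x) + sin x"
    unfolding Ubar_def
    by (rule DERIV_imp_deriv) (auto intro!: derivative_eq_intros simp: algebra_simps)
qed

lemma deriv2_Ubar:
  "deriv (deriv (Ubar L1 L2)) = (\<lambda>x. - 4 * L1 * cos (2 * x) - 4 * L2 * sin (2 * x) + cos x)"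
proof
  fix x
  show "deriv (deriv (Ubar L1 L2)) x = - 4 * L1 * cos (2 * x) - 4 * L2 * sin (2 * x) + cos x"
    unfolding deriv_Ubar
    by (rule DERIV_imp_deriv) (auto intro!: derivative_eq_intros simp: algebra_simps)
qed

lemma rotation_system_iff:
  fixes a b c s p q :: "'a :: comm_ring_1"
  assumes "c ^ 2 + s ^ 2 = 1"
  shows "a * c + b * s = p \<and> a * s - b * c = q \<longleftrightarrow> a = c * p + s * q \<and> b = s * p - c * q"
proof -
  have "c * (a * c + b * s) + s * (a * s - b * c) = a * (c ^ 2 + s ^ 2)"
    "s * (a * c + b * s) - c * (a * s - b * c) = b * (c ^ 2 + s ^ 2)"
    "(c * p + s * q) * c + (s * p - c * q) * s = p * (c ^ 2 + s ^ 2)"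
    "(c * p + s * q) * s - (s * p - c * q) * c = q * (c ^ 2 + s ^ 2)"
    by (simp_all add: algebra_simps power2_eq_square)
  then show ?thesis
    using assms by (metis mult_1_right)
qed

lemma degenerate_critical_point_Ubar_iff:
  "deriv (Ubar L1 L2) \<theta> = 0 \<and> deriv (deriv (Ubar L1 L2)) \<theta> = 0 \<longleftrightarrow>
     L1 = 3 * cos \<theta> / 4 - cos \<theta> ^ 3 / 2 \<and> L2 = sin \<theta> ^ 3 / 2"
proof -
  let ?C = "cos \<theta>" and ?S = "sin \<theta>"
  have "deriv (Ubar L1 L2) \<theta> = 0 \<and> deriv (deriv (Ubar L1 L2)) \<theta> = 0 \<longleftrightarrow>
      L1 * cos (2 * \<theta>) + L2 * sin (2 * \<theta>) = ?C / 4 \<and>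
      L1 * sin (2 * \<theta>) - L2 * cos (2 * \<theta>) = ?S / 2"
    \<comment> \<open>\<open>deriv2_Ubar\<close> first: \<open>deriv_Ubar\<close> would rewrite the inner \<open>deriv\<close> away\<close>
    unfolding deriv2_Ubar unfolding deriv_Ubar by (auto simp: algebra_simps)
  also have "\<dots> \<longleftrightarrow>
      L1 = cos (2 * \<theta>) * (?C / 4) + sin (2 * \<theta>) * (?S / 2) \<and>
      L2 = sin (2 * \<theta>) * (?C / 4) - cos (2 * \<theta>) * (?S / 2)"
    by (rule rotation_system_iff) (simp add: add.commute)
  also have "cos (2 * \<theta>) * (?C / 4) + sin (2 * \<theta>) * (?S / 2) = ?C * (?C ^ 2 + 3 * ?S ^ 2) / 4"
    by (simp only: cos_double sin_double) (simp add: algebra_simps power2_eq_square)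
  also have "\<dots> = 3 * ?C / 4 - ?C ^ 3 / 2"
    unfolding sin_squared_eq by (simp add: field_simps power2_eq_square power3_eq_cube)
  also have "sin (2 * \<theta>) * (?C / 4) - cos (2 * \<theta>) * (?S / 2) = ?S ^ 3 / 2"
    by (simp only: cos_double sin_double) (simp add: algebra_simps power2_eq_square power3_eq_cube)
  finally show ?thesis .
qed

lemma mem_Gamma1_iff:
  "(L1, L2) \<in> Gamma1 \<longleftrightarrow> (\<exists>\<theta>. L1 = 3 * cos \<theta> / 4 - cos \<theta> ^ 3 / 2 \<and> L2 = sin \<theta> ^ 3 / 2)"
proof -
  have reflect: "cos t ^ 3 / 2 - 3 * cos t / 4 = 3 * cos (pi - t) / 4 - cos (pi - t) ^ 3 / 2 \<and>
      sin t ^ 3 / 2 = sin (pi - t) ^ 3 / 2" for t :: real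
    by simp
  show ?thesis
  proof
    assume "(L1, L2) \<in> Gamma1"
    then obtain t where "L1 = cos t ^ 3 / 2 - 3 * cos t / 4" "L2 = sin t ^ 3 / 2"
      unfolding Gamma1_def by blast
    then show "\<exists>\<theta>. L1 = 3 * cos \<theta> / 4 - cos \<theta> ^ 3 / 2 \<and> L2 = sin \<theta> ^ 3 / 2"
      using reflect[of t] by blast
  next
    assume "\<exists>\<theta>. L1 = 3 * cos \<theta> / 4 - cos \<theta> ^ 3 / 2 \<and> L2 = sin \<theta> ^ 3 / 2"
    then obtain \<theta> where "L1 = 3 * cos \<theta> / 4 - cos \<theta> ^ 3 / 2" "L2 = sin \<theta> ^ 3 / 2"
      by blast
    moreover have "(3 * cos \<theta> / 4 - cos \<theta> ^ 3 / 2, sin \<theta> ^ 3 / 2) =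
        (cos (pi - \<theta>) ^ 3 / 2 - 3 * cos (pi - \<theta>) / 4, sin (pi - \<theta>) ^ 3 / 2)"
      by simp
    ultimately show "(L1, L2) \<in> Gamma1"
      unfolding Gamma1_def by blast
  qed
qed

theorem mainTheorem1:
  fixes L1 L2 :: real
  shows "(\<exists>\<theta>::real. deriv (Ubar L1 L2) \<theta> = 0 \<and> deriv (deriv (Ubar L1 L2)) \<theta> = 0)
         \<longleftrightarrow> (L1, L2) \<in> Gamma1"
  unfolding degenerate_critical_point_Ubar_iff mem_Gamma1_iff ..

end
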